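(* Let $K:\mathbb{Z}_{>0}\to\mathbb{Z}$ be the number of ordered factorizations, defined by $$K(n) = \varepsilon(n) + \sum_{d\mid n,\ d<n} K(d)\qquad (n\ge1),$$ and for a real (or complex) number $x$ let $\kappa_x$ be the recursive divisor function defined by $$\kappa_x(n) = n^x + \sum_{d \mid n,\ d<n} \kappa_x(d)\qquad (n\ge 1).$$ Then $\kappa_0 = \mathbf{1} * K$, i.e. $\kappa_0(n)=\sum_{d\mid n} K(d)$ for all $n\ge1$. Furthermore: 1. $K = (\varepsilon + \mathbf{1} * K)/2$; 2. $K = \dfrac{\varepsilon}{2} + \dfrac{\mathbf{1}}{2^2} + \dfrac{\mathbf{1}*\mathbf{1}}{2^3} + \cdots$, i.e. $K(n)=\sum_{k\ge0} 2^{-(k+1)}\mathbf{1}^{*k}(n)$ for every $n$, where $\mathbf{1}^{*k}$ is the $k$-fold Dirichlet convolution power of $\mathbf{1}$ (with $\mathbf{1}^{*0}=\varepsilon$); 3. $\kappa_x = \mathrm{id}_x * K$ for every $x$; 4. $K^{-1} = 2\varepsilon - \mathbf{1}$.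
   Context: $K(n)$ equals the number of ways to write $n$ as an ordered product of integers greater than $1$ (with $K(1)=1$). Arithmetic functions are functions $\mathbb{Z}_{>0}\to\mathbb{C}$, added and scaled pointwise. $f*g$ denotes Dirichlet convolution, $(f*g)(n)=\sum_{d\mid n} f(d)g(n/d)$, and $f^{-1}$ denotes the Dirichlet inverse. Notation: $\varepsilon(n)=1$ if $n=1$ and $0$ otherwise; $\mathbf{1}(n)=1$ for all $n$; $\mathrm{id}_x(n)=n^x$; $\kappa_0$ is $\kappa_x$ with $x=0$. *)

theory Defs
  imports "HOL-Analysis.Complex_Transcendental"
begin

text \<open>Arithmetic functions are modelled as functions nat \<Rightarrow> complex; only their
  values at positive arguments are meaningful (value at 0 is irrelevant).\<close>

definition dconv :: "(nat \<Rightarrow> complex) \<Rightarrow> (nat \<Rightarrow> complex) \<Rightarrow> nat \<Rightarrow> complex"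
  (infixl "\<star>" 70) where
  "dconv f g n = (\<Sum>d \<in> {d. d dvd n}. f d * g (n div d))"

definition eps :: "nat \<Rightarrow> complex" where
  "eps n = (if n = 1 then 1 else 0)"

definition one :: "nat \<Rightarrow> complex" where
  "one n = 1"

definition id_pow :: "complex \<Rightarrow> nat \<Rightarrow> complex" where
  "id_pow x n = (of_nat n :: complex) powr x"

definition is_dinverse :: "(nat \<Rightarrow> complex) \<Rightarrow> (nat \<Rightarrow> complex) \<Rightarrow> bool" where
  "is_dinverse f g \<longleftrightarrow> (\<forall>n>0. (f \<star> g) n = eps n)"

primrec dconv_pow :: "(nat \<Rightarrow> complex) \<Rightarrow> nat \<Rightarrow> nat \<Rightarrow> complex" where
  "dconv_pow f 0 = eps"
| "dconv_pow f (Suc k) = f \<star> dconv_pow f k"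

function K :: "nat \<Rightarrow> int" where
  "K n = (if n = 0 then 0 else (if n = 1 then 1 else 0) + (\<Sum>d \<in> {d. d dvd n \<and> d < n}. K d))"
  by auto
termination
  by (relation "measure id") auto

function kappa :: "complex \<Rightarrow> nat \<Rightarrow> complex" where
  "kappa x n = (if n = 0 then 0 else (of_nat n :: complex) powr x + (\<Sum>d \<in> {d. d dvd n \<and> d < n}. kappa x d))"
  by auto
termination
  by (relation "measure snd") auto

definition Kc :: "nat \<Rightarrow> complex" where
  "Kc n = of_int (K n)"

end

theory Submission
  imports Defs
begin

text \<open>If \<open>f(n) = g(n) + \<Sum>{f(d) | d dvd n, d < n}\<close>, splitting off the divisor \<open>d = n\<close>
  gives \<open>f * \<one> = 2f - g\<close>, i.e. \<open>f * (2\<epsilon> - \<one>) = g\<close>. For \<open>f = K\<close>, \<open>g = \<epsilon>\<close> this makes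
  \<open>2\<epsilon> - \<one>\<close> the Dirichlet inverse of \<open>K\<close>; convolving with \<open>K\<close> then yields \<open>f = g * K\<close>
  for every such \<open>f\<close>, in particular \<open>\<kappa>\<^sub>x = id\<^sub>x * K\<close>. Iterating \<open>K = (\<epsilon> + \<one> * K)/2\<close>
  gives \<open>K = \<Sum>{\<one>\<^sup>k/2\<^sup>k\<^sup>+\<^sup>1 | k < N} + (K * \<one>\<^sup>N)/2\<^sup>N\<close> (powers taken for \<open>*\<close>). All values
  involved are nonnegative integers, so the partial sums at \<open>m\<close> are bounded by \<open>K(m)\<close>;
  hence \<open>\<one>\<^sup>N(m)/2\<^sup>N \<longrightarrow> 0\<close> for every \<open>m\<close>, and with it the remainder.\<close>

lemma dconv_commute:
  assumes "n > 0" shows "(f \<star> g) n = (g \<star> f) n"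
  unfolding dconv_def
  by (rule sum.reindex_bij_witness[where i="\<lambda>d. n div d" and j="\<lambda>d. n div d"])
     (use assms in \<open>auto simp: div_div_eq_right dvd_div_eq_0_iff\<close>)

lemma dconv_cong:
  assumes "n > 0" "\<And>m. m > 0 \<Longrightarrow> f m = f' m" "\<And>m. m > 0 \<Longrightarrow> g m = g' m"
  shows "(f \<star> g) n = (f' \<star> g') n"
  unfolding dconv_def using assms by (intro sum.cong) (auto simp: dvd_div_eq_0_iff)

lemma dconv_eps_right:
  assumes "n > 0" shows "(f \<star> eps) n = f n"
proof -
  have "(f \<star> eps) n = (\<Sum>d\<in>{d. d dvd n}. if d = n then f d else 0)"
    unfolding dconv_def eps_def using assms by (intro sum.cong) (auto simp: dvd_div_eq_mult)
  also have "\<dots> = f n" using assms by simp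
  finally show ?thesis .
qed

lemma dconv_eps_left: "n > 0 \<Longrightarrow> (eps \<star> f) n = f n"
  using dconv_commute dconv_eps_right by metis

lemma dconv_linear_left:
  "((\<lambda>m. a * f m + b * g m) \<star> h) n = a * (f \<star> h) n + b * (g \<star> h) n"
  unfolding dconv_def by (simp add: sum.distrib sum_distrib_left algebra_simps)

lemma dconv_linear_right:
  "(f \<star> (\<lambda>m. a * g m + b * h m)) n = a * (f \<star> g) n + b * (f \<star> h) n"
  unfolding dconv_def by (simp add: sum.distrib sum_distrib_left algebra_simps)

lemma dconv_assoc:
  assumes "n > 0" shows "((f \<star> g) \<star> h) n = (f \<star> (g \<star> h)) n"
proof -
  let ?S = "Sigma {d. d dvd n} (\<lambda>d. {e. e dvd d})"
  let ?T = "Sigma {a. a dvd n} (\<lambda>a. {b. b dvd n div a})"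
  have "((f \<star> g) \<star> h) n = (\<Sum>(d, e)\<in>?S. f e * g (d div e) * h (n div d))"
    unfolding dconv_def sum_distrib_right
    using assms by (subst sum.Sigma) (auto simp: dvd_div_eq_0_iff)
  also have "\<dots> = (\<Sum>(a, b)\<in>?T. f a * g b * h (n div a div b))"
  proof (rule sum.reindex_bij_witness[where i="\<lambda>(a, b). (a * b, a)" and j="\<lambda>(d, e). (e, d div e)"])
    fix p assume "p \<in> ?S"
    then obtain d e where de: "p = (d, e)" "e * (d div e) = d" "n div e div (d div e) = n div d"
      "e dvd n" "d div e dvd n div e"
      using assms by (auto elim!: dvdE simp: dvd_div_eq_0_iff)
    then show "(case (case p of (d, e) \<Rightarrow> (e, d div e)) of (a, b) \<Rightarrow> (a * b, a)) = p"
      "(case p of (d, e) \<Rightarrow> (e, d div e)) \<in> ?T"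
      "(case (case p of (d, e) \<Rightarrow> (e, d div e)) of (a, b) \<Rightarrow> f a * g b * h (n div a div b)) =
        (case p of (d, e) \<Rightarrow> f e * g (d div e) * h (n div d))"
      by (auto simp: div_mult2_eq)
  next
    fix p assume "p \<in> ?T"
    then obtain a b where "p = (a, b)" "a > 0" "a * b dvd n"
      using assms by (auto elim!: dvdE simp: dvd_div_eq_0_iff)
    then show "(case (case p of (a, b) \<Rightarrow> (a * b, a)) of (d, e) \<Rightarrow> (e, d div e)) = p"
      "(case p of (a, b) \<Rightarrow> (a * b, a)) \<in> ?S"
      by auto
  qed
  also have "\<dots> = (f \<star> (g \<star> h)) n"
    unfolding dconv_def sum_distrib_left mult.assoc
    using assms by (subst sum.Sigma) (auto simp: dvd_div_eq_0_iff)
  finally show ?thesis .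
qed

lemma sum_divisors_split_self:
  assumes "(n :: nat) > 0"
  shows "(\<Sum>d\<in>{d. d dvd n}. f d) = f n + (\<Sum>d\<in>{d. d dvd n \<and> d < n}. f d)"
proof -
  have "{d. d dvd n} = insert n {d. d dvd n \<and> d < n}"
    using assms by (auto dest: dvd_imp_le simp: order_le_less)
  then show ?thesis by simp
qed

lemma proper_divisor_rec_dconv_one:
  assumes rec: "\<And>m. m > 0 \<Longrightarrow> f m = g m + (\<Sum>d\<in>{d. d dvd m \<and> d < m}. f d)"
    and "n > 0"
  shows "(f \<star> one) n = 2 * f n - g n"
  using rec[OF \<open>n > 0\<close>] sum_divisors_split_self[OF \<open>n > 0\<close>, of f]
  unfolding dconv_def one_def by simp

lemma proper_divisor_rec_dconv_two_eps_minus_one: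
  assumes rec: "\<And>m. m > 0 \<Longrightarrow> f m = g m + (\<Sum>d\<in>{d. d dvd m \<and> d < m}. f d)"
    and "n > 0"
  shows "(f \<star> (\<lambda>m. 2 * eps m - one m)) n = g n"
  using dconv_linear_right[of f 2 eps "-1" one n] dconv_eps_right[OF \<open>n > 0\<close>, of f]
    proper_divisor_rec_dconv_one[OF rec \<open>n > 0\<close>]
  by simp

lemma Kc_proper_divisor_rec: "n > 0 \<Longrightarrow> Kc n = eps n + (\<Sum>d\<in>{d. d dvd n \<and> d < n}. Kc d)"
  unfolding Kc_def eps_def by (subst K.simps) simp

lemma kappa_proper_divisor_rec:
  "n > 0 \<Longrightarrow> kappa x n = id_pow x n + (\<Sum>d\<in>{d. d dvd n \<and> d < n}. kappa x d)"
  unfolding id_pow_def by (subst kappa.simps) simp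

lemma is_dinverse_Kc: "is_dinverse Kc (\<lambda>n. 2 * eps n - one n)"
  unfolding is_dinverse_def
  using proper_divisor_rec_dconv_two_eps_minus_one[OF Kc_proper_divisor_rec] by blast

lemma proper_divisor_rec_eq_dconv_Kc:
  assumes rec: "\<And>m. m > 0 \<Longrightarrow> f m = g m + (\<Sum>d\<in>{d. d dvd m \<and> d < m}. f d)"
    and "n > 0"
  shows "f n = (g \<star> Kc) n"
proof -
  have "f n = (f \<star> eps) n" using dconv_eps_right[OF \<open>n > 0\<close>] by simp
  also have "\<dots> = (f \<star> ((\<lambda>m. 2 * eps m - one m) \<star> Kc)) n"
    using is_dinverse_Kc dconv_commute unfolding is_dinverse_def
    by (intro dconv_cong \<open>n > 0\<close>) metis+
  also have "\<dots> = ((f \<star> (\<lambda>m. 2 * eps m - one m)) \<star> Kc) n"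
    using dconv_assoc[OF \<open>n > 0\<close>] by simp
  also have "\<dots> = (g \<star> Kc) n"
    using proper_divisor_rec_dconv_two_eps_minus_one[OF rec] by (intro dconv_cong \<open>n > 0\<close>) auto
  finally show ?thesis .
qed

lemma kappa_eq_id_pow_dconv_Kc: "n > 0 \<Longrightarrow> kappa x n = (id_pow x \<star> Kc) n"
  by (rule proper_divisor_rec_eq_dconv_Kc[OF kappa_proper_divisor_rec[of _ x]])

lemma Kc_dconv_dconv_pow_one_Suc:
  assumes "n > 0"
  shows "(Kc \<star> dconv_pow one (Suc N)) n = 2 * (Kc \<star> dconv_pow one N) n - dconv_pow one N n"
proof -
  have "(Kc \<star> dconv_pow one (Suc N)) n = ((Kc \<star> one) \<star> dconv_pow one N) n"
    using dconv_assoc[OF assms] by simp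
  also have "\<dots> = ((\<lambda>m. 2 * Kc m + (-1) * eps m) \<star> dconv_pow one N) n"
    using proper_divisor_rec_dconv_one[OF Kc_proper_divisor_rec] by (intro dconv_cong assms) auto
  also have "\<dots> = 2 * (Kc \<star> dconv_pow one N) n - dconv_pow one N n"
    using dconv_linear_left[of 2 Kc "-1" eps] dconv_eps_left[OF assms] by simp
  finally show ?thesis .
qed

lemma Kc_eq_partial_sum_plus_remainder:
  assumes "n > 0"
  shows "Kc n = (\<Sum>k<N. dconv_pow one k n / 2 ^ (k + 1)) + (Kc \<star> dconv_pow one N) n / 2 ^ N"
proof (induction N)
  case 0
  then show ?case using dconv_eps_right[OF assms] by simp
next
  case (Suc N)
  have "(Kc \<star> dconv_pow one N) n / 2 ^ N
      = dconv_pow one N n / 2 ^ (N + 1) + (Kc \<star> dconv_pow one (Suc N)) n / 2 ^ Suc N"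
    unfolding Kc_dconv_dconv_pow_one_Suc[OF assms] by (simp add: field_simps)
  with Suc.IH show ?case by simp
qed

lemma Nats_sum: "(\<And>x. x \<in> A \<Longrightarrow> f x \<in> \<nat>) \<Longrightarrow> sum f A \<in> \<nat>"
  by (induction A rule: infinite_finite_induct) auto

lemma dconv_Nats: "(\<And>m. f m \<in> \<nat>) \<Longrightarrow> (\<And>m. g m \<in> \<nat>) \<Longrightarrow> (f \<star> g) n \<in> \<nat>"
  unfolding dconv_def by (intro Nats_sum Nats_mult) auto

lemma dconv_pow_Nats: "(\<And>m. f m \<in> \<nat>) \<Longrightarrow> dconv_pow f k n \<in> \<nat>"
  by (induction k arbitrary: n) (auto simp: eps_def intro: dconv_Nats)

lemma Kc_Nats: "Kc n \<in> \<nat>"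
proof (induction n rule: less_induct)
  case (less n)
  then show ?case
    using Kc_proper_divisor_rec[of n] by (cases "n = 0") (auto simp: Kc_def eps_def intro!: Nats_sum)
qed

lemma Nats_complex_Re: "(z :: complex) \<in> \<nat> \<Longrightarrow> Re z \<ge> 0 \<and> norm z = Re z"
  by (auto elim!: Nats_cases)

lemma dconv_pow_one_div_power_tendsto_0:
  assumes "m > 0"
  shows "(\<lambda>N. dconv_pow one N m / 2 ^ N) \<longlonglongrightarrow> 0"
proof -
  define c where "c k = Re (dconv_pow one k m)" for k
  have c: "c k \<ge> 0" "norm (dconv_pow one k m) = c k" for k
    unfolding c_def using Nats_complex_Re[OF dconv_pow_Nats] by (auto simp: one_def)
  have bounded: "(\<Sum>k<N. c k / 2 ^ (k + 1)) \<le> Re (Kc m)" for N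
  proof -
    have "Re (Kc m) = (\<Sum>k<N. c k / 2 ^ (k + 1)) + Re ((Kc \<star> dconv_pow one N) m) / 2 ^ N"
      unfolding c_def by (subst Kc_eq_partial_sum_plus_remainder[OF assms, of N]) simp
    moreover have "Re ((Kc \<star> dconv_pow one N) m) \<ge> 0"
      using Nats_complex_Re[OF dconv_Nats[OF Kc_Nats dconv_pow_Nats]] by (auto simp: one_def)
    ultimately show ?thesis by simp
  qed
  have "summable (\<lambda>k. c k / 2 ^ (k + 1))"
    using c bounded by (intro summableI_nonneg_bounded) auto
  then have "(\<lambda>k. 2 * (c k / 2 ^ (k + 1))) \<longlonglongrightarrow> 0"
    by (intro tendsto_mult_right_zero summable_LIMSEQ_zero)
  then have "(\<lambda>k. norm (dconv_pow one k m / 2 ^ k)) \<longlonglongrightarrow> 0"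
    by (simp add: c norm_divide norm_power)
  then show ?thesis by (rule tendsto_norm_zero_cancel)
qed

lemma Kc_sums_dconv_pow_one:
  assumes "n > 0"
  shows "(\<lambda>k. dconv_pow one k n / 2 ^ (k + 1)) sums Kc n"
proof -
  have "(\<lambda>N. \<Sum>d\<in>{d. d dvd n}. Kc d * (dconv_pow one N (n div d) / 2 ^ N))
      \<longlonglongrightarrow> (\<Sum>d\<in>{d. d dvd n}. Kc d * 0)"
    using assms
    by (intro tendsto_sum tendsto_mult tendsto_const dconv_pow_one_div_power_tendsto_0)
       (auto simp: dvd_div_eq_0_iff)
  then have "(\<lambda>N. (Kc \<star> dconv_pow one N) n / 2 ^ N) \<longlonglongrightarrow> 0"
    by (simp add: dconv_def sum_divide_distrib)
  then have "(\<lambda>N. Kc n - (Kc \<star> dconv_pow one N) n / 2 ^ N) \<longlonglongrightarrow> Kc n - 0"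
    by (intro tendsto_diff tendsto_const)
  moreover have "Kc n - (Kc \<star> dconv_pow one N) n / 2 ^ N = (\<Sum>k<N. dconv_pow one k n / 2 ^ (k + 1))"
    for N using Kc_eq_partial_sum_plus_remainder[OF assms, of N] by simp
  ultimately show ?thesis
    unfolding sums_def by simp
qed

theorem theorem3:
  shows "(\<forall>n>0. kappa 0 n = (one \<star> Kc) n)
    \<and> (\<forall>n>0. Kc n = (eps n + (one \<star> Kc) n) / 2)
    \<and> (\<forall>n>0. (\<lambda>k. dconv_pow one k n / 2 ^ (k + 1)) sums Kc n)
    \<and> (\<forall>x. \<forall>n>0. kappa x n = (id_pow x \<star> Kc) n)
    \<and> is_dinverse Kc (\<lambda>n. 2 * eps n - one n)"
proof (intro conjI allI impI)
  fix n :: nat assume "n > 0"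
  have "kappa 0 n = (id_pow 0 \<star> Kc) n"
    using \<open>n > 0\<close> by (rule kappa_eq_id_pow_dconv_Kc)
  also have "\<dots> = (one \<star> Kc) n"
    using \<open>n > 0\<close> by (intro dconv_cong) (auto simp: id_pow_def one_def)
  finally show "kappa 0 n = (one \<star> Kc) n" .
next
  fix n :: nat assume "n > 0"
  then show "Kc n = (eps n + (one \<star> Kc) n) / 2"
    using proper_divisor_rec_dconv_one[OF Kc_proper_divisor_rec] dconv_commute by simp
next
  fix n :: nat assume "n > 0"
  then show "(\<lambda>k. dconv_pow one k n / 2 ^ (k + 1)) sums Kc n"
    by (rule Kc_sums_dconv_pow_one)
next
  fix x and n :: nat assume "n > 0"
  then show "kappa x n = (id_pow x \<star> Kc) n"
    by (rule kappa_eq_id_pow_dconv_Kc)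
qed (fact is_dinverse_Kc)

end
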